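(* Let $N\ge1$, let $\mathbf{h}_{1,N},\dots,\mathbf{h}_{N,N}\in\mathbb{R}^d$ be arbitrary points and $0<r_{1,N}\le r_{2,N}\le\dots\le r_{N,N}$ radii. Define $$\mathbf{R}_N(\mathbf{h}_{1,N},\dots,\mathbf{h}_{N,N})=\mathbf{R}_{r_{1,N}}(\mathbf{h}_{1,N})\circ\mathbf{R}_{5r_{2,N}}(\mathbf{h}_{2,N})\circ\cdots\circ\mathbf{R}_{5^{N-1}r_{N,N}}(\mathbf{h}_{N,N}).$$ Then for every solenoidal $\boldsymbol\varphi\in L^p_{\rm loc}(\mathbb{R}^d;\mathbb{R}^d)$ ($1<p<\infty$) and every $n=1,\dots,N$, the field $\mathbf{R}_N(\mathbf{h}_{1,N},\dots,\mathbf{h}_{N,N})[\boldsymbol\varphi]$ is equal to a constant vector $\Lambda_n$ on the ball $B_{r_{n,N}}(\mathbf{h}_{n,N})$.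
   Context: Let $H\in C^\infty(\mathbb{R})$ with $0\le H\le1$, $H'(Z)=H'(1-Z)$ for all $Z$, $H(Z)=0$ for $Z\le1/4$, $H(Z)=1$ for $Z\ge3/4$. For $\varphi\in L^1_{\rm loc}(\mathbb{R}^d)$ and $r>0$ let $E_r[\varphi](x)=\frac1{|B_r(0)|}\int_{B_r(0)}\varphi\,dz\,H(2-\frac{|x|}{r})+\varphi(x)H(\frac{|x|}{r}-1)$ (applied componentwise to vector fields). For a solenoidal vector field $\boldsymbol\varphi$ set $\mathbf{R}_r[\boldsymbol\varphi]=E_r[\boldsymbol\varphi]-\mathcal{B}_{2r,r}[\mathrm{div}_xE_r[\boldsymbol\varphi]|_{B_{2r}(0)\setminus B_r(0)}]$, where $\mathcal{B}_{2r,r}$ is the Bogovskii operator on the annulus $B_{2r}(0)\setminus\overline{B_r(0)}$ (a bounded right inverse of the divergence taking zero-mean $L^p$ functions on the annulus to $W^{1,p}_0$ vector fields on the annulus, extended by zero, obtained by scaling from the annulus with radii $1,2$). For $\mathbf{h}\in\mathbb{R}^d$, $\mathbf{R}_r(\mathbf{h})[\boldsymbol\varphi]=S_{-\mathbf{h}}\mathbf{R}_r[S_{\mathbf{h}}\boldsymbol\varphi]$ with $S_{\mathbf{h}}f(x)=f(\mathbf{h}+x)$. This operator extends to solenoidal $L^p_{\rm loc}$ fields, preserves solenoidality, equals the average $\frac1{|B_r(\mathbf{h})|}\int_{B_r(\mathbf{h})}\boldsymbol\varphi$ on $B_r(\mathbf{h})$, equals $\boldsymbol\varphi$ on $\{|x-\mathbf{h}|>2r\}$,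 and satisfies $\mathbf{R}_r(\mathbf{h})[\boldsymbol\varphi]=\boldsymbol\varphi$ whenever $\boldsymbol\varphi$ is constant on $B_{2r}(\mathbf{h})$. *)

theory Defs
  imports "HOL-Analysis.Analysis"
begin

coinductive smooth_fun :: "('a::euclidean_space \<Rightarrow> real) \<Rightarrow> bool" where
  "(\<forall>x. f differentiable (at x)) \<Longrightarrow>
   (\<forall>b\<in>Basis. smooth_fun (\<lambda>x. frechet_derivative f (at x) b)) \<Longrightarrow> smooth_fun f"

definition grad :: "('a::euclidean_space \<Rightarrow> real) \<Rightarrow> 'a \<Rightarrow> 'a" where
  "grad f x = (\<Sum>b\<in>Basis. frechet_derivative f (at x) b *\<^sub>R b)"

definition test_fun :: "('a::euclidean_space \<Rightarrow> real) \<Rightarrow> bool" where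
  "test_fun \<psi> \<longleftrightarrow> smooth_fun \<psi> \<and> compact (closure {x. \<psi> x \<noteq> 0})"

definition Lp_loc :: "real \<Rightarrow> ('a::euclidean_space \<Rightarrow> 'a) \<Rightarrow> bool" where
  "Lp_loc p \<phi> \<longleftrightarrow> \<phi> \<in> borel_measurable lebesgue \<and>
     (\<forall>K. compact K \<longrightarrow> set_integrable lebesgue K (\<lambda>x. norm (\<phi> x) powr p))"

definition solenoidal :: "('a::euclidean_space \<Rightarrow> 'a) \<Rightarrow> bool" where
  "solenoidal \<phi> \<longleftrightarrow> (\<forall>\<psi>. test_fun \<psi> \<longrightarrow> (LINT x|lebesgue. \<phi> x \<bullet> grad \<psi> x) = 0)"

definition cutoff :: "(real \<Rightarrow> real) \<Rightarrow> bool" where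
  "cutoff H \<longleftrightarrow> smooth_fun H \<and> (\<forall>Z. 0 \<le> H Z \<and> H Z \<le> 1) \<and>
     (\<forall>Z. deriv H Z = deriv H (1 - Z)) \<and>
     (\<forall>Z. Z \<le> 1/4 \<longrightarrow> H Z = 0) \<and> (\<forall>Z. Z \<ge> 3/4 \<longrightarrow> H Z = 1)"

definition annulus1 :: "'a::euclidean_space set" where
  "annulus1 = ball 0 2 - cball 0 1"

definition bog_adm :: "real \<Rightarrow> ('a::euclidean_space \<Rightarrow> real) \<Rightarrow> bool" where
  "bog_adm p f \<longleftrightarrow> f \<in> borel_measurable lebesgue \<and> (\<forall>x. x \<notin> annulus1 \<longrightarrow> f x = 0) \<and>
     integrable lebesgue (\<lambda>x. \<bar>f x\<bar> powr p) \<and> (LINT x|lebesgue. f x) = 0"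

text \<open>A Bogovskii operator: linear on admissible data, values are fields on the annulus
  extended by zero, in W^{1,p} with the gradient bounded in L^p by the data,
  and a (weak) right inverse of the divergence on the annulus.\<close>
definition bogovskii :: "real \<Rightarrow> (('a::euclidean_space \<Rightarrow> real) \<Rightarrow> 'a \<Rightarrow> 'a) \<Rightarrow> bool" where
  "bogovskii p Bog \<longleftrightarrow>
     (\<forall>f x. x \<notin> annulus1 \<longrightarrow> Bog f x = 0) \<and>
     (\<forall>f g a b. bog_adm p f \<longrightarrow> bog_adm p g \<longrightarrow>
        Bog (\<lambda>x. a * f x + b * g x) = (\<lambda>x. a *\<^sub>R Bog f x + b *\<^sub>R Bog g x)) \<and>
     (\<forall>f. bog_adm p f \<longrightarrow>
        (\<forall>\<psi>. test_fun \<psi> \<longrightarrow> closure {x. \<psi> x \<noteq> 0} \<subseteq> annulus1 \<longrightarrow>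
           (LINT x|lebesgue. Bog f x \<bullet> grad \<psi> x) = - (LINT x|lebesgue. f x * \<psi> x))) \<and>
     (\<exists>C. \<forall>f. bog_adm p f \<longrightarrow>
        Bog f \<in> borel_measurable lebesgue \<and>
        integrable lebesgue (\<lambda>x. norm (Bog f x) powr p) \<and>
        (\<forall>i\<in>Basis. \<forall>j\<in>Basis. \<exists>g. g \<in> borel_measurable lebesgue \<and>
            integrable lebesgue (\<lambda>x. \<bar>g x\<bar> powr p) \<and>
            (LINT x|lebesgue. \<bar>g x\<bar> powr p) \<le> C * (LINT x|lebesgue. \<bar>f x\<bar> powr p) \<and>
            (\<forall>\<psi>. test_fun \<psi> \<longrightarrow>
               (LINT x|lebesgue. (Bog f x \<bullet> i) * (grad \<psi> x \<bullet> j)) = - (LINT x|lebesgue. g x * \<psi> x))))"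

definition bog_scaled :: "(('a::euclidean_space \<Rightarrow> real) \<Rightarrow> 'a \<Rightarrow> 'a) \<Rightarrow> real \<Rightarrow> ('a \<Rightarrow> real) \<Rightarrow> 'a \<Rightarrow> 'a" where
  "bog_scaled Bog r g x = r *\<^sub>R Bog (\<lambda>y. g (r *\<^sub>R y)) (x /\<^sub>R r)"

definition ball_avg :: "real \<Rightarrow> ('a::euclidean_space \<Rightarrow> 'a) \<Rightarrow> 'a" where
  "ball_avg r \<phi> = (1 / measure lebesgue (ball (0::'a) r)) *\<^sub>R (LINT z:ball 0 r|lebesgue. \<phi> z)"

definition E_op :: "(real \<Rightarrow> real) \<Rightarrow> real \<Rightarrow> ('a::euclidean_space \<Rightarrow> 'a) \<Rightarrow> 'a \<Rightarrow> 'a" where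
  "E_op H r \<phi> x = H (2 - norm x / r) *\<^sub>R ball_avg r \<phi> + H (norm x / r - 1) *\<^sub>R \<phi> x"

text \<open>Divergence of E_r[phi] for a solenoidal phi (div phi = 0), restricted to the
  annulus and extended by zero.\<close>
definition divE_ann :: "(real \<Rightarrow> real) \<Rightarrow> real \<Rightarrow> ('a::euclidean_space \<Rightarrow> 'a) \<Rightarrow> 'a \<Rightarrow> real" where
  "divE_ann H r \<phi> x =
     (if x \<in> ball 0 (2*r) - cball 0 r
      then ball_avg r \<phi> \<bullet> grad (\<lambda>y. H (2 - norm y / r)) x
           + \<phi> x \<bullet> grad (\<lambda>y. H (norm y / r - 1)) x
      else 0)"

definition R_op :: "(real \<Rightarrow> real) \<Rightarrow> (('a::euclidean_space \<Rightarrow> real) \<Rightarrow> 'a \<Rightarrow> 'a) \<Rightarrow> real \<Rightarrow> ('a \<Rightarrow> 'a) \<Rightarrow> 'a \<Rightarrow> 'a" where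
  "R_op H Bog r \<phi> x = E_op H r \<phi> x - bog_scaled Bog r (divE_ann H r \<phi>) x"

definition R_at :: "(real \<Rightarrow> real) \<Rightarrow> (('a::euclidean_space \<Rightarrow> real) \<Rightarrow> 'a \<Rightarrow> 'a) \<Rightarrow> real \<Rightarrow> 'a \<Rightarrow> ('a \<Rightarrow> 'a) \<Rightarrow> 'a \<Rightarrow> 'a" where
  "R_at H Bog r h \<phi> x = R_op H Bog r (\<lambda>y. \<phi> (h + y)) (x - h)"

definition R_N :: "(real \<Rightarrow> real) \<Rightarrow> (('a::euclidean_space \<Rightarrow> real) \<Rightarrow> 'a \<Rightarrow> 'a) \<Rightarrow> nat \<Rightarrow> (nat \<Rightarrow> 'a) \<Rightarrow> (nat \<Rightarrow> real)
    \<Rightarrow> ('a \<Rightarrow> 'a) \<Rightarrow> 'a \<Rightarrow> 'a" where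
  "R_N H Bog N h r = foldr (\<lambda>k acc. R_at H Bog (5 ^ (k - 1) * r k) (h k) \<circ> acc) [1..<N+1] id"

end

theory Submission
  imports Defs
begin

text \<open>Write \<open>R(\<rho>,h)\<close> for a single factor. It leaves a field unchanged outside \<open>B(h,2\<rho>)\<close>, and
  also at every point of \<open>B(h,2\<rho>)\<close> if the field is constant on all of \<open>B(h,2\<rho>)\<close>. Hence if \<open>\<psi>\<close>
  is constant on \<open>B(c,5s)\<close> and \<open>\<rho> \<le> s\<close>, then \<open>R(\<rho>,h)[\<psi>]\<close> takes the same constant on \<open>B(c,s)\<close>,
  whatever \<open>h\<close>: a point of \<open>B(c,s)\<close> either lies outside \<open>B(h,2\<rho>)\<close>, or \<open>B(h,2\<rho>) \<subseteq> B(c,5s)\<close>.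
  Fix \<open>n\<close>. The factor \<open>R(5^(n-1) r\<^sub>n, h\<^sub>n)\<close> replaces its argument by an average on
  \<open>B(h\<^sub>n, 5^(n-1) r\<^sub>n)\<close>. Each factor \<open>k < n\<close> applied after it has radius \<open>5^(k-1) r\<^sub>k \<le> 5^(k-1) r\<^sub>n\<close>,
  so the constancy survives on a ball shrinking by the factor 5 at each step, down to
  \<open>B(h\<^sub>n, r\<^sub>n)\<close>.\<close>

lemma cutoff_eq_0: "cutoff H \<Longrightarrow> Z \<le> 1/4 \<Longrightarrow> H Z = 0"
  and cutoff_eq_1: "cutoff H \<Longrightarrow> 3/4 \<le> Z \<Longrightarrow> H Z = 1"
  by (simp_all add: cutoff_def)

lemma cutoff_differentiable: "cutoff H \<Longrightarrow> H differentiable (at x)"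
  unfolding cutoff_def by (auto elim: smooth_fun.cases)

text \<open>The symmetry \<open>H' Z = H' (1 - Z)\<close> makes \<open>H Z + H (1 - Z)\<close> constant.\<close>
lemma cutoff_add_reflect:
  assumes "cutoff H"
  shows "H Z + H (1 - Z) = 1"
proof -
  have D: "\<And>x. DERIV H x :> deriv H x"
    using cutoff_differentiable[OF assms] DERIV_deriv_iff_real_differentiable by blast
  have "\<forall>x. DERIV (\<lambda>Z. H Z + H (1 - Z)) x :> 0"
  proof
    fix x :: real
    have "DERIV (\<lambda>Z. 1 - Z) x :> - 1"
      by (auto intro!: derivative_eq_intros)
    hence "DERIV (\<lambda>Z. H Z + H (1 - Z)) x :> deriv H x + deriv H (1 - x) * (- 1)"
      by (intro DERIV_add D DERIV_chain2[OF D])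
    thus "DERIV (\<lambda>Z. H Z + H (1 - Z)) x :> 0" using assms by (simp add: cutoff_def)
  qed
  from DERIV_isconst_all[OF this, of Z 0] show ?thesis
    using cutoff_eq_0[OF assms, of 0] cutoff_eq_1[OF assms, of 1] by simp
qed

lemma grad_one_minus:
  fixes B :: "'a::euclidean_space \<Rightarrow> real"
  assumes "B differentiable (at y)"
  shows "grad (\<lambda>y. 1 - B y) y = - grad B y"
proof -
  have "(B has_derivative frechet_derivative B (at y)) (at y)"
    using assms frechet_derivative_works by blast
  hence "((\<lambda>y. 1 - B y) has_derivative (\<lambda>v. 0 - frechet_derivative B (at y) v))
      (at y)"
    by (intro derivative_intros)
  hence "frechet_derivative (\<lambda>y. 1 - B y) (at y) =
      (\<lambda>v. - frechet_derivative B (at y) v)"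
    using frechet_derivative_at by fastforce
  thus ?thesis by (simp add: grad_def sum_negf)
qed

lemma ball_avg_const:
  fixes \<psi> :: "'a::euclidean_space \<Rightarrow> 'a"
  assumes "0 < \<rho>" "\<And>y. y \<in> ball 0 \<rho> \<Longrightarrow> \<psi> y = c"
  shows "ball_avg \<rho> \<psi> = c"
proof -
  have "(LINT z:ball (0::'a) \<rho>|lebesgue. \<psi> z) = (LINT z:ball (0::'a) \<rho>|lebesgue. c)"
    using assms(2) by (intro set_lebesgue_integral_cong) auto
  also have "\<dots> = measure lebesgue (ball (0::'a) \<rho>) *\<^sub>R c"
    by (rule set_integral_const) (use emeasure_bounded_finite[of "ball (0::'a) \<rho>"] in auto)
  finally show ?thesis
    unfolding ball_avg_def using assms(1) content_ball_gt_0_iff[of "0::'a" \<rho>] by simp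
qed

lemma bogovskii_zero:
  assumes "bogovskii p Bog"
  shows "Bog (\<lambda>x. 0) = (\<lambda>x. 0)"
proof -
  have "bog_adm p (\<lambda>x. 0::real)" unfolding bog_adm_def by simp
  hence "Bog (\<lambda>x. 0 * 0 + 0 * 0) =
      (\<lambda>x. 0 *\<^sub>R Bog (\<lambda>x. 0) x + 0 *\<^sub>R Bog (\<lambda>x. 0) x)"
    using assms unfolding bogovskii_def by blast
  thus ?thesis by simp
qed

lemma bog_scaled_off_annulus:
  assumes "bogovskii p Bog" "0 < \<rho>" "norm x \<le> \<rho> \<or> 2 * \<rho> \<le> norm x"
  shows "bog_scaled Bog \<rho> g x = 0"
proof -
  have "norm (x /\<^sub>R \<rho>) = norm x / \<rho>"
    using assms(2) by (simp add: divide_inverse_commute)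
  hence "x /\<^sub>R \<rho> \<notin> annulus1"
    using assms(2,3) unfolding annulus1_def by (auto simp: field_simps)
  thus ?thesis using assms(1) unfolding bogovskii_def bog_scaled_def by auto
qed

lemma R_at_off_annulus:
  assumes "bogovskii p Bog" "0 < \<rho>" "norm (x - h) \<le> \<rho> \<or> 2 * \<rho> \<le> norm (x - h)"
  shows "R_at H Bog \<rho> h \<psi> x =
    H (2 - norm (x - h) / \<rho>) *\<^sub>R ball_avg \<rho> (\<lambda>y. \<psi> (h + y))
    + H (norm (x - h) / \<rho> - 1) *\<^sub>R \<psi> x"
  using bog_scaled_off_annulus[OF assms] by (simp add: R_at_def R_op_def E_op_def)

lemma R_at_eq_ball_avg:
  assumes "cutoff H" "bogovskii p Bog" "0 < \<rho>" "norm (x - h) \<le> \<rho>"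
  shows "R_at H Bog \<rho> h \<psi> x = ball_avg \<rho> (\<lambda>y. \<psi> (h + y))"
proof -
  have "norm (x - h) / \<rho> \<le> 1" using assms(3,4) by (simp add: field_simps)
  hence "H (2 - norm (x - h) / \<rho>) = 1" "H (norm (x - h) / \<rho> - 1) = 0"
    using cutoff_eq_1[OF assms(1), of "2 - norm (x - h) / \<rho>"]
      cutoff_eq_0[OF assms(1), of "norm (x - h) / \<rho> - 1"] by linarith+
  thus ?thesis using R_at_off_annulus[OF assms(2,3)] assms(4) by simp
qed

lemma R_at_eq_outside:
  assumes "cutoff H" "bogovskii p Bog" "0 < \<rho>" "2 * \<rho> \<le> norm (x - h)"
  shows "R_at H Bog \<rho> h \<psi> x = \<psi> x"
proof -
  have "2 \<le> norm (x - h) / \<rho>" using assms(3,4) by (simp add: field_simps)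
  hence "H (2 - norm (x - h) / \<rho>) = 0" "H (norm (x - h) / \<rho> - 1) = 1"
    using cutoff_eq_0[OF assms(1), of "2 - norm (x - h) / \<rho>"]
      cutoff_eq_1[OF assms(1), of "norm (x - h) / \<rho> - 1"] by linarith+
  thus ?thesis using R_at_off_annulus[OF assms(2,3)] assms(4) by simp
qed

text \<open>On the annulus the two cut-offs sum to \<open>1\<close>, so for a constant field the divergence
  of \<open>E\<^sub>\<rho>\<close> vanishes and the Bogovskii correction is zero.\<close>
lemma R_at_eq_const:
  fixes \<psi> :: "'a::euclidean_space \<Rightarrow> 'a"
  assumes "cutoff H" "bogovskii p Bog" "0 < \<rho>"
    and const: "\<forall>y\<in>ball h (2 * \<rho>). \<psi> y = c" and x: "x \<in> ball h (2 * \<rho>)"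
  shows "R_at H Bog \<rho> h \<psi> x = c"
proof -
  define \<psi>' where "\<psi>' = (\<lambda>y. \<psi> (h + y))"
  have \<psi>'_c: "\<psi>' y = c" if "norm y < 2 * \<rho>" for y
    using const that unfolding \<psi>'_def by (auto simp: dist_norm)
  have avg: "ball_avg \<rho> \<psi>' = c"
    using assms(3) by (intro ball_avg_const) (auto intro: \<psi>'_c)
  define B where "B = (\<lambda>y::'a. H (norm y / \<rho> - 1))"
  have inner_cutoff: "(\<lambda>y::'a. H (2 - norm y / \<rho>)) = (\<lambda>y. 1 - B y)"
  proof
    fix y :: 'a
    have "H (2 - norm y / \<rho>) + H (1 - (2 - norm y / \<rho>)) = 1"
      by (rule cutoff_add_reflect[OF assms(1)])
    thus "H (2 - norm y / \<rho>) = 1 - B y" unfolding B_def by simp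
  qed
  have B_diff: "B differentiable (at y)" if "y \<noteq> 0" for y
    unfolding B_def using that assms(3)
    by (intro differentiable_compose[OF cutoff_differentiable[OF assms(1)]] derivative_intros)
      auto
  have "divE_ann H \<rho> \<psi>' y = 0" for y
  proof (cases "y \<in> ball 0 (2 * \<rho>) - cball 0 \<rho>")
    case True
    hence "y \<noteq> 0" "norm y < 2 * \<rho>" using assms(3) by auto
    hence "grad (\<lambda>y. H (2 - norm y / \<rho>)) y = - grad B y" "\<psi>' y = c"
      using grad_one_minus[OF B_diff] inner_cutoff \<psi>'_c by auto
    thus ?thesis using True unfolding divE_ann_def B_def by (simp add: avg)
  next
    case False
    thus ?thesis unfolding divE_ann_def by (simp only: if_False)
  qed
  hence "bog_scaled Bog \<rho> (divE_ann H \<rho> \<psi>') (x - h) = 0"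
    unfolding bog_scaled_def by (simp add: bogovskii_zero[OF assms(2)])
  moreover have "\<psi>' (x - h) = c"
    using \<psi>'_c x by (simp add: dist_norm norm_minus_commute)
  hence "E_op H \<rho> \<psi>' (x - h) = c"
    using cutoff_add_reflect[OF assms(1), of "2 - norm (x - h) / \<rho>"]
    unfolding E_op_def avg by (simp flip: scaleR_add_left)
  ultimately show ?thesis unfolding R_at_def R_op_def \<psi>'_def by simp
qed

lemma R_at_keeps_const_on_ball:
  assumes "cutoff H" "bogovskii p Bog" "0 < \<rho>" "\<rho> \<le> s"
    and const: "\<forall>y\<in>ball c (5 * s). \<psi> y = \<Lambda>" and x: "x \<in> ball c s"
  shows "R_at H Bog \<rho> h \<psi> x = \<Lambda>"
proof (cases "2 * \<rho> \<le> norm (x - h)")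
  case True
  thus ?thesis using R_at_eq_outside[OF assms(1-3) True] const x assms(3,4) by auto
next
  case False
  have "ball h (2 * \<rho>) \<subseteq> ball c (5 * s)"
  proof
    fix y assume "y \<in> ball h (2 * \<rho>)"
    hence "dist c y \<le> dist c x + dist x h + dist h y"
      "dist c x < s" "dist x h < 2 * \<rho>" "dist h y < 2 * \<rho>"
      using dist_triangle[of c y x] dist_triangle[of x y h] x False
      by (auto simp: dist_norm)
    thus "y \<in> ball c (5 * s)" using assms(4) by simp
  qed
  moreover have "x \<in> ball h (2 * \<rho>)"
    using False by (simp add: dist_norm norm_minus_commute)
  ultimately show ?thesis using R_at_eq_const[OF assms(1-3)] const by blast
qed

definition R_suffix :: "(real \<Rightarrow> real) \<Rightarrow> (('a::euclidean_space \<Rightarrow> real) \<Rightarrow> 'a \<Rightarrow> 'a)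
    \<Rightarrow> nat \<Rightarrow> (nat \<Rightarrow> 'a) \<Rightarrow> (nat \<Rightarrow> real) \<Rightarrow> nat \<Rightarrow> ('a \<Rightarrow> 'a) \<Rightarrow> 'a \<Rightarrow> 'a" where
  "R_suffix H Bog N h r j =
     foldr (\<lambda>k acc. R_at H Bog (5 ^ (k - 1) * r k) (h k) \<circ> acc) [j..<N+1] id"

lemma R_N_eq_R_suffix: "R_N H Bog N h r = R_suffix H Bog N h r 1"
  by (simp add: R_N_def R_suffix_def)

lemma R_suffix_Cons:
  "j \<le> N \<Longrightarrow>
    R_suffix H Bog N h r j \<phi> =
      R_at H Bog (5 ^ (j - 1) * r j) (h j) (R_suffix H Bog N h r (Suc j) \<phi>)"
proof -
  assume "j \<le> N"
  hence "[j..<N+1] = j # [Suc j..<N+1]" by (intro upt_conv_Cons) simp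
  thus ?thesis by (simp add: R_suffix_def)
qed

lemma chain_le_mono:
  fixes r :: "nat \<Rightarrow> 'a::preorder"
  assumes "\<And>k. 1 \<le> k \<Longrightarrow> k < N \<Longrightarrow> r k \<le> r (k + 1)"
    and "1 \<le> k" "k \<le> n" "n \<le> N"
  shows "r k \<le> r n"
  using assms(3,4)
proof (induction rule: dec_induct)
  case (step m)
  have "r k \<le> r m" using step by simp
  also have "r m \<le> r (m + 1)" using assms(1,2) step by simp
  finally show ?case by simp
qed simp

lemma R_suffix_const_on_ball:
  assumes "cutoff H" "bogovskii p Bog" "0 < r 1"
    and "\<And>k. 1 \<le> k \<Longrightarrow> k < N \<Longrightarrow> r k \<le> r (k + 1)"
    and "1 \<le> j" "j \<le> n" "n \<le> N"
  shows "\<exists>\<Lambda>. \<forall>x\<in>ball (h n) (5 ^ (j - 1) * r n). R_suffix H Bog N h r j \<phi> x = \<Lambda>"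
  using \<open>j \<le> n\<close> \<open>1 \<le> j\<close>
proof (induction rule: inc_induct)
  case base
  have "r 1 \<le> r n"
    using chain_le_mono[where r=r and N=N and k=1 and n=n, OF assms(4)] base \<open>n \<le> N\<close>
    by simp
  hence \<rho>: "0 < 5 ^ (n - 1) * r n" using assms(3) by simp
  have "R_suffix H Bog N h r n \<phi> x =
      ball_avg (5 ^ (n - 1) * r n) (\<lambda>y. R_suffix H Bog N h r (Suc n) \<phi> (h n + y))"
    if "x \<in> ball (h n) (5 ^ (n - 1) * r n)" for x
    unfolding R_suffix_Cons[OF \<open>n \<le> N\<close>]
    by (rule R_at_eq_ball_avg[OF assms(1,2) \<rho>])
      (use that in \<open>simp add: dist_norm norm_minus_commute\<close>)
  thus ?case by blast
next
  case (step k)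
  obtain \<Lambda>
    where "\<forall>y\<in>ball (h n) (5 ^ (Suc k - 1) * r n). R_suffix H Bog N h r (Suc k) \<phi> y = \<Lambda>"
    using step.IH by auto
  moreover have "5 ^ (Suc k - 1) * r n = 5 * (5 ^ (k - 1) * r n)"
    using step.prems by (cases k) auto
  ultimately have \<Lambda>:
      "\<forall>y\<in>ball (h n) (5 * (5 ^ (k - 1) * r n)). R_suffix H Bog N h r (Suc k) \<phi> y = \<Lambda>"
    by (simp only:)
  have "r 1 \<le> r k" "r k \<le> r n"
    using chain_le_mono[where r=r and N=N and k=1 and n=k, OF assms(4)]
      chain_le_mono[where r=r and N=N and k=k and n=n, OF assms(4)] step \<open>n \<le> N\<close>
    by simp_all
  hence \<rho>: "0 < 5 ^ (k - 1) * r k" "5 ^ (k - 1) * r k \<le> 5 ^ (k - 1) * r n"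
    using assms(3) by simp_all
  have "k \<le> N" using step \<open>n \<le> N\<close> by simp
  have "R_suffix H Bog N h r k \<phi> x = \<Lambda>" if "x \<in> ball (h n) (5 ^ (k - 1) * r n)" for x
    unfolding R_suffix_Cons[OF \<open>k \<le> N\<close>]
    by (rule R_at_keeps_const_on_ball[OF assms(1,2) \<rho> \<Lambda> that])
  thus ?case by blast
qed

theorem lemma3p2:
  fixes H :: "real \<Rightarrow> real"
    and Bog :: "('a::euclidean_space \<Rightarrow> real) \<Rightarrow> 'a \<Rightarrow> 'a"
    and p :: real and N :: nat
    and h :: "nat \<Rightarrow> 'a" and r :: "nat \<Rightarrow> real"
    and \<phi> :: "'a \<Rightarrow> 'a"
  assumes "cutoff H"
    and "1 < p"
    and "bogovskii p Bog"
    and "N \<ge> 1"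
    and "0 < r 1"
    and "\<And>k. 1 \<le> k \<Longrightarrow> k < N \<Longrightarrow> r k \<le> r (k + 1)"
    and "Lp_loc p \<phi>"
    and "solenoidal \<phi>"
  shows "\<forall>n\<in>{1..N}. \<exists>\<Lambda>. \<forall>x\<in>ball (h n) (r n). R_N H Bog N h r \<phi> x = \<Lambda>"
proof
  fix n assume "n \<in> {1..N}"
  thus "\<exists>\<Lambda>. \<forall>x\<in>ball (h n) (r n). R_N H Bog N h r \<phi> x = \<Lambda>"
    using R_suffix_const_on_ball[where r=r and N=N and h=h and j=1 and n=n and \<phi>=\<phi>,
        OF assms(1,3,5,6)]
    by (simp add: R_N_eq_R_suffix)
qed

end
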